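(* Let $\mathcal A$ be an NFA and let $R$ be a strict partial order on its states with $R\subseteq\ \subseteq^{\mathrm{bw}}$. Then $P(R,\mathrm{id})$ is good for pruning on NFA: $\mathcal L(\mathrm{Prune}(\mathcal A,P(R,\mathrm{id})))=\mathcal L(\mathcal A)$. In particular this holds for $R$ the strict part of $\subseteq^{\mathrm{bw}}$.
   Context: An NFA is $\mathcal A=(\Sigma,Q,I,F,\delta)$, $\delta\subseteq Q\times\Sigma\times Q$ (assumed forward and backward complete); its language is the set of finite words having a finite trace starting in $I$ and ending in $F$. Backward finite trace inclusion: $p\subseteq^{\mathrm{bw}}q$ iff for every finite word $w$, if there is a finite $w$-trace starting in $I$ and ending in $p$, then there is a finite $w$-trace starting in $I$ and ending in $q$. Strict part: $p\subseteq q$ and not $q\subseteq p$. $\mathrm{Prune}(\mathcal A,P)$ has transition set $\{t\in\delta:\nexists t'\in\delta,(t,t')\in P\}$; $P(R_b,R_f)=\{((p,\sigma,r),(p',\sigma,r'))\in\delta\times\delta:p\,R_b\,p',\ r\,R_f\,r'\}$; $\mathrm{id}$ is the identity. *)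

theory Defs
  imports Main
begin

record ('s, 'q) nfa =
  alph  :: "'s set"
  states :: "'q set"
  init  :: "'q set"
  final :: "'q set"
  trans :: "('q \<times> 's \<times> 'q) set"

definition wf_nfa :: "('s, 'q) nfa \<Rightarrow> bool" where
  "wf_nfa A \<longleftrightarrow> finite (alph A) \<and> finite (states A)
     \<and> init A \<subseteq> states A \<and> final A \<subseteq> states A
     \<and> trans A \<subseteq> states A \<times> alph A \<times> states A"

definition forward_complete :: "('s, 'q) nfa \<Rightarrow> bool" where
  "forward_complete A \<longleftrightarrow>
     (\<forall>p\<in>states A. \<forall>a\<in>alph A. \<exists>q. (p, a, q) \<in> trans A)"

definition backward_complete :: "('s, 'q) nfa \<Rightarrow> bool" where
  "backward_complete A \<longleftrightarrow>
     (\<forall>q\<in>states A. \<forall>a\<in>alph A. \<exists>p. (p, a, q) \<in> trans A)"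

definition is_trace :: "('q \<times> 's \<times> 'q) set \<Rightarrow> 's list \<Rightarrow> 'q list \<Rightarrow> bool" where
  "is_trace \<delta> w qs \<longleftrightarrow> length qs = Suc (length w)
     \<and> (\<forall>i < length w. (qs ! i, w ! i, qs ! Suc i) \<in> \<delta>)"

definition lang :: "('s, 'q) nfa \<Rightarrow> 's list set" where
  "lang A = {w. set w \<subseteq> alph A \<and> (\<exists>qs. is_trace (trans A) w qs
              \<and> hd qs \<in> init A \<and> last qs \<in> final A)}"

definition bw_incl :: "('s, 'q) nfa \<Rightarrow> 'q \<Rightarrow> 'q \<Rightarrow> bool" where
  "bw_incl A p q \<longleftrightarrow> (\<forall>w. set w \<subseteq> alph A \<longrightarrow>
     (\<exists>qs. is_trace (trans A) w qs \<and> hd qs \<in> init A \<and> last qs = p) \<longrightarrow>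
     (\<exists>qs. is_trace (trans A) w qs \<and> hd qs \<in> init A \<and> last qs = q))"

definition strict_part :: "('q \<Rightarrow> 'q \<Rightarrow> bool) \<Rightarrow> 'q \<Rightarrow> 'q \<Rightarrow> bool" where
  "strict_part R p q \<longleftrightarrow> R p q \<and> \<not> R q p"

definition P_rel :: "('s, 'q) nfa \<Rightarrow> ('q \<Rightarrow> 'q \<Rightarrow> bool) \<Rightarrow> ('q \<Rightarrow> 'q \<Rightarrow> bool)
     \<Rightarrow> (('q \<times> 's \<times> 'q) \<times> ('q \<times> 's \<times> 'q)) set" where
  "P_rel A Rb Rf = {((p, a, r), (p', a', r')).
      (p, a, r) \<in> trans A \<and> (p', a', r') \<in> trans A \<and> a = a' \<and> Rb p p' \<and> Rf r r'}"

definition prune :: "('s, 'q) nfa \<Rightarrow> (('q \<times> 's \<times> 'q) \<times> ('q \<times> 's \<times> 'q)) set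
     \<Rightarrow> ('s, 'q) nfa" where
  "prune A P = A\<lparr> trans := {t \<in> trans A. \<nexists>t'. t' \<in> trans A \<and> (t, t') \<in> P} \<rparr>"

definition strict_po_on :: "'q set \<Rightarrow> ('q \<Rightarrow> 'q \<Rightarrow> bool) \<Rightarrow> bool" where
  "strict_po_on S R \<longleftrightarrow> (\<forall>x\<in>S. \<not> R x x)
     \<and> (\<forall>x\<in>S. \<forall>y\<in>S. \<forall>z\<in>S. R x y \<longrightarrow> R y z \<longrightarrow> R x z)"

end

theory Submission
  imports Defs
begin

text \<open>Every run of the NFA is rebuilt in the pruned automaton by induction on the word.
  Given a state q reached by v a, choose among the a-predecessors of q that are reachable by v
  an R-maximal one p (there are finitely many states and R is a strict order). The transition
  (p, a, q) survives pruning: a dominating transition (p', a, q) with R p p' would start in a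
  state p' that, by backward inclusion, is also reachable by v, contradicting maximality.\<close>

definition reaches :: "('q \<times> 's \<times> 'q) set \<Rightarrow> 'q set \<Rightarrow> 's list \<Rightarrow> 'q \<Rightarrow> bool" where
  "reaches \<delta> I w q \<longleftrightarrow> (\<exists>qs. is_trace \<delta> w qs \<and> hd qs \<in> I \<and> last qs = q)"

lemma is_trace_Nil_iff: "is_trace \<delta> [] qs \<longleftrightarrow> (\<exists>q. qs = [q])"
  unfolding is_trace_def by (cases qs) auto

lemma is_trace_snoc_iff:
  "is_trace \<delta> (v @ [a]) (qs @ [q]) \<longleftrightarrow> is_trace \<delta> v qs \<and> (last qs, a, q) \<in> \<delta>"
proof (cases "length qs = Suc (length v)")
  case True
  then have "qs \<noteq> []" by auto
  with True have last: "last qs = qs ! length v" by (simp add: last_conv_nth)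
  have "(\<forall>i < Suc (length v). ((qs @ [q]) ! i, (v @ [a]) ! i, (qs @ [q]) ! Suc i) \<in> \<delta>) \<longleftrightarrow>
        (qs ! length v, a, q) \<in> \<delta> \<and> (\<forall>i < length v. (qs ! i, v ! i, qs ! Suc i) \<in> \<delta>)"
    using True by (simp add: All_less_Suc nth_append)
  with True last show ?thesis unfolding is_trace_def by auto
qed (simp add: is_trace_def)

lemma is_trace_snocE:
  assumes "is_trace \<delta> (v @ [a]) qs"
  obtains qs' q where "qs = qs' @ [q]" "qs' \<noteq> []"
proof -
  have "length qs = Suc (Suc (length v))" using assms by (simp add: is_trace_def)
  then have "qs = butlast qs @ [last qs]" "butlast qs \<noteq> []"
    by (auto simp flip: length_0_conv)
  then show thesis using that by blast
qed

lemma reaches_Nil_iff: "reaches \<delta> I [] q \<longleftrightarrow> q \<in> I"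
  by (auto simp: reaches_def is_trace_Nil_iff)

lemma reaches_snoc_iff:
  "reaches \<delta> I (v @ [a]) q \<longleftrightarrow> (\<exists>p. reaches \<delta> I v p \<and> (p, a, q) \<in> \<delta>)"
proof
  assume "reaches \<delta> I (v @ [a]) q"
  then obtain qs where qs: "is_trace \<delta> (v @ [a]) qs" "hd qs \<in> I" "last qs = q"
    by (auto simp: reaches_def)
  then obtain qs' q' where "qs = qs' @ [q']" "qs' \<noteq> []" by (auto elim: is_trace_snocE)
  with qs show "\<exists>p. reaches \<delta> I v p \<and> (p, a, q) \<in> \<delta>"
    unfolding reaches_def by (auto simp: is_trace_snoc_iff)
next
  assume "\<exists>p. reaches \<delta> I v p \<and> (p, a, q) \<in> \<delta>"
  then obtain qs where "is_trace \<delta> v qs" "hd qs \<in> I" "(last qs, a, q) \<in> \<delta>"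
    by (auto simp: reaches_def)
  moreover have "qs \<noteq> []" using \<open>is_trace \<delta> v qs\<close> by (auto simp: is_trace_def)
  ultimately show "reaches \<delta> I (v @ [a]) q"
    unfolding reaches_def by (intro exI[of _ "qs @ [q]"]) (simp add: is_trace_snoc_iff)
qed

lemma reaches_mono: "reaches \<delta> I w q \<Longrightarrow> \<delta> \<subseteq> \<delta>' \<Longrightarrow> reaches \<delta>' I w q"
  unfolding reaches_def is_trace_def by blast

lemma lang_eq_reaches:
  "lang A = {w. set w \<subseteq> alph A \<and> (\<exists>q\<in>final A. reaches (trans A) (init A) w q)}"
  unfolding lang_def reaches_def by blast

lemma bw_incl_iff_reaches:
  "bw_incl A p q \<longleftrightarrow>
     (\<forall>w. set w \<subseteq> alph A \<longrightarrow> reaches (trans A) (init A) w p \<longrightarrow> reaches (trans A) (init A) w q)"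
  unfolding bw_incl_def reaches_def ..

lemma transp_bw_incl: "transp (bw_incl A)"
  unfolding transp_def bw_incl_def by blast

lemma strict_po_on_strict_part: "transp Q \<Longrightarrow> strict_po_on S (strict_part Q)"
  unfolding strict_po_on_def strict_part_def transp_def by blast

lemma strict_po_on_finite_has_maximal:
  assumes "strict_po_on T R" "S \<subseteq> T" "finite S" "S \<noteq> {}"
  shows "\<exists>x\<in>S. \<forall>y\<in>S. \<not> R x y"
proof -
  \<comment> \<open>the converse of R on S, so that its minimal elements are the R-maximal ones\<close>
  define r where "r = {(y, x). x \<in> S \<and> y \<in> S \<and> R x y}"
  have "r \<subseteq> S \<times> S" by (auto simp: r_def)
  then have "finite r" using \<open>finite S\<close> by (blast intro: finite_subset)
  moreover have "Relation.trans r"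
    using assms(1,2) unfolding r_def strict_po_on_def by (intro transI) blast
  moreover have "irrefl r"
    using assms(1,2) unfolding r_def strict_po_on_def by (intro irreflI) blast
  ultimately have "wf r" by (simp add: finite_acyclic_wf acyclic_irrefl)
  with \<open>S \<noteq> {}\<close> show ?thesis
    unfolding wf_eq_minimal r_def by (metis (no_types, lifting) case_prodI equals0I mem_Collect_eq)
qed

lemma prune_fields [simp]:
  "alph (prune A P) = alph A" "states (prune A P) = states A"
  "init (prune A P) = init A" "final (prune A P) = final A"
  by (simp_all add: prune_def)

lemma trans_prune_subset: "trans (prune A P) \<subseteq> trans A"
  by (auto simp: prune_def)

lemma trans_prune_P_rel_id_iff:
  "(p, a, q) \<in> trans (prune A (P_rel A R (=))) \<longleftrightarrow>
     (p, a, q) \<in> trans A \<and> (\<forall>p'. (p', a, q) \<in> trans A \<longrightarrow> \<not> R p p')"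
  by (auto simp: prune_def P_rel_def)

lemma lang_prune_subset: "lang (prune A P) \<subseteq> lang A"
  unfolding lang_eq_reaches using reaches_mono[OF _ trans_prune_subset] by fastforce

lemma reaches_prune_P_rel_id:
  assumes "wf_nfa A" "strict_po_on (states A) R"
    and R_bw: "\<forall>p\<in>states A. \<forall>q\<in>states A. R p q \<longrightarrow> bw_incl A p q"
  shows "set w \<subseteq> alph A \<Longrightarrow> reaches (trans A) (init A) w q \<Longrightarrow>
    reaches (trans (prune A (P_rel A R (=)))) (init A) w q"
proof (induction w arbitrary: q rule: rev_induct)
  case Nil
  then show ?case by (simp add: reaches_Nil_iff)
next
  case (snoc a v)
  have trans_states: "(p, a, q) \<in> trans A \<Longrightarrow> p \<in> states A" for p
    using \<open>wf_nfa A\<close> by (auto simp: wf_nfa_def)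
  define S where "S = {p. reaches (trans A) (init A) v p \<and> (p, a, q) \<in> trans A}"
  have "S \<noteq> {}" using snoc.prems(2) by (auto simp: S_def reaches_snoc_iff)
  moreover have S_states: "S \<subseteq> states A" using trans_states by (auto simp: S_def)
  moreover have "finite S"
    using S_states \<open>wf_nfa A\<close> finite_subset by (auto simp: wf_nfa_def)
  ultimately obtain p where p: "p \<in> S" and p_max: "\<forall>p'\<in>S. \<not> R p p'"
    using strict_po_on_finite_has_maximal[OF \<open>strict_po_on (states A) R\<close>] by blast
  have "\<not> R p p'" if "(p', a, q) \<in> trans A" for p'
  proof
    assume "R p p'"
    with R_bw p that trans_states have "bw_incl A p p'" by (auto simp: S_def)
    with p snoc.prems(1) have "reaches (trans A) (init A) v p'"
      by (auto simp: S_def bw_incl_iff_reaches)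
    with that have "p' \<in> S" by (simp add: S_def)
    with p_max \<open>R p p'\<close> show False by blast
  qed
  with p have "(p, a, q) \<in> trans (prune A (P_rel A R (=)))"
    by (simp add: S_def trans_prune_P_rel_id_iff)
  moreover have "reaches (trans (prune A (P_rel A R (=)))) (init A) v p"
    using snoc.IH snoc.prems(1) p by (simp add: S_def)
  ultimately show ?case by (auto simp: reaches_snoc_iff)
qed

lemma lang_prune_P_rel_id:
  assumes "wf_nfa A" "strict_po_on (states A) R"
    and "\<forall>p\<in>states A. \<forall>q\<in>states A. R p q \<longrightarrow> bw_incl A p q"
  shows "lang (prune A (P_rel A R (=))) = lang A"
  using lang_prune_subset reaches_prune_P_rel_id[OF assms]
  by (fastforce simp: lang_eq_reaches)

text \<open>Completeness of the automaton is part of the setting of the paper but not needed here.\<close>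

theorem theorem5p7:
  fixes A :: "('s, 'q) nfa" and R :: "'q \<Rightarrow> 'q \<Rightarrow> bool"
  assumes "wf_nfa A" and "forward_complete A" and "backward_complete A"
    and "strict_po_on (states A) R"
    and "\<forall>p\<in>states A. \<forall>q\<in>states A. R p q \<longrightarrow> bw_incl A p q"
  shows "lang (prune A (P_rel A R (=))) = lang A
    \<and> lang (prune A (P_rel A (strict_part (bw_incl A)) (=))) = lang A"
proof
  show "lang (prune A (P_rel A R (=))) = lang A"
    using lang_prune_P_rel_id[OF assms(1,4,5)] .
  have "strict_po_on (states A) (strict_part (bw_incl A))"
    using strict_po_on_strict_part[OF transp_bw_incl] .
  moreover have "\<forall>p\<in>states A. \<forall>q\<in>states A. strict_part (bw_incl A) p q \<longrightarrow> bw_incl A p q"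
    by (simp add: strict_part_def)
  ultimately show "lang (prune A (P_rel A (strict_part (bw_incl A)) (=))) = lang A"
    using lang_prune_P_rel_id[OF assms(1)] by blast
qed

end
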